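(* Let $n\ge3$, $e\ge2$, $1\le k\le e-1$. The assignment $q_1\mapsto\tilde t_i\tilde t_{i-k}$ (an element independent of $i\in\mathbb{Z}/e\mathbb{Z}$) and $q_m\mapsto\tilde s_{m+1}$ for $2\le m\le n-1$ defines an injective group homomorphism from the Artin–Tits group $B(2,1,n-1)$ into $B^{(k)}(e,e,n)$.
   Context: $B(2,1,n-1)$ is the Artin–Tits group of type $B_{n-1}$ with generators $q_1,\dots,q_{n-1}$ and relations $q_1q_2q_1q_2=q_2q_1q_2q_1$, $q_mq_{m+1}q_m=q_{m+1}q_mq_{m+1}$ for $2\le m\le n-2$, and $q_aq_b=q_bq_a$ for $|a-b|>1$. $B^{(k)}(e,e,n)$ is the group with generators $\tilde t_0,\dots,\tilde t_{e-1},\tilde s_3,\dots,\tilde s_n$ and relations: $\tilde s_i\tilde s_j\tilde s_i=\tilde s_j\tilde s_i\tilde s_j$ for $|i-j|=1$; $\tilde s_i\tilde s_j=\tilde s_j\tilde s_i$ for $|i-j|>1$; $\tilde s_3\tilde t_i\tilde s_3=\tilde t_i\tilde s_3\tilde t_i$ for $i\in\mathbb{Z}/e\mathbb{Z}$; $\tilde s_j\tilde t_i=\tilde t_i\tilde s_j$ for $i\in\mathbb{Z}/e\mathbb{Z}$, $4\le j\le n$; $\tilde t_i\tilde t_{i-k}=\tilde t_j\tilde t_{j-k}$ for $i,j\in\mathbb{Z}/e\mathbb{Z}$ (it is the group of fractions of the Garside monoid with the same presentation). *)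

theory Defs
  imports Main
begin

text \<open>Group presentations: words over letters (generator, inverted?) and the
  congruence generated by free cancellation and a set of defining relations.\<close>

type_synonym 'a word = "('a \<times> bool) list"

definition letter_inv :: "'a \<times> bool \<Rightarrow> 'a \<times> bool" where
  "letter_inv x = (fst x, \<not> snd x)"

definition word_inv :: "'a word \<Rightarrow> 'a word" where
  "word_inv w = rev (map letter_inv w)"

definition gen :: "'a \<Rightarrow> 'a word" where
  "gen a = [(a, False)]"

inductive peq :: "('a word \<times> 'a word) set \<Rightarrow> 'a word \<Rightarrow> 'a word \<Rightarrow> bool"
  for R where
  peq_refl: "peq R w w"
| peq_sym: "peq R u v \<Longrightarrow> peq R v u"
| peq_trans: "peq R u v \<Longrightarrow> peq R v w \<Longrightarrow> peq R u w"
| peq_cancel: "peq R (u @ [x, letter_inv x] @ v) (u @ v)"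
| peq_rel: "(r, s) \<in> R \<Longrightarrow> peq R (u @ r @ v) (u @ s @ v)"

definition wsubst :: "('a \<Rightarrow> 'b word) \<Rightarrow> 'a word \<Rightarrow> 'b word" where
  "wsubst f w = concat (map (\<lambda>x. if snd x then word_inv (f (fst x)) else f (fst x)) w)"

definition words_over :: "'a set \<Rightarrow> 'a word \<Rightarrow> bool" where
  "words_over A w \<longleftrightarrow> (\<forall>x \<in> set w. fst x \<in> A)"

text \<open>Artin--Tits group B(2,1,n-1): generators q_1..q_{n-1} (as naturals).\<close>
definition relsB :: "nat \<Rightarrow> (nat word \<times> nat word) set" where
  "relsB n =
     {(gen 1 @ gen 2 @ gen 1 @ gen 2, gen 2 @ gen 1 @ gen 2 @ gen 1)}
   \<union> {(gen m @ gen (m+1) @ gen m, gen (m+1) @ gen m @ gen (m+1)) | m. 2 \<le> m \<and> m \<le> n - 2}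
   \<union> {(gen a @ gen b, gen b @ gen a) | a b. 1 \<le> a \<and> a \<le> n - 1 \<and> 1 \<le> b \<and> b \<le> n - 1
        \<and> (a > b + 1 \<or> b > a + 1)}"

definition gensB :: "nat \<Rightarrow> nat set" where
  "gensB n = {1..n-1}"

text \<open>B^(k)(e,e,n): generators T i (i in Z/eZ, represented by 0..e-1), S j (3 <= j <= n).\<close>
datatype genE = T nat | S nat

definition gensE :: "nat \<Rightarrow> nat \<Rightarrow> genE set" where
  "gensE e n = {T i | i. i < e} \<union> {S j | j. 3 \<le> j \<and> j \<le> n}"

definition tt :: "nat \<Rightarrow> nat \<Rightarrow> nat \<Rightarrow> genE word" where
  "tt e k i = gen (T i) @ gen (T ((i + e - k) mod e))"

definition relsE :: "nat \<Rightarrow> nat \<Rightarrow> nat \<Rightarrow> (genE word \<times> genE word) set" where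
  "relsE e k n =
     {(gen (S i) @ gen (S j) @ gen (S i), gen (S j) @ gen (S i) @ gen (S j)) | i j.
        3 \<le> i \<and> i \<le> n \<and> 3 \<le> j \<and> j \<le> n \<and> (i = j + 1 \<or> j = i + 1)}
   \<union> {(gen (S i) @ gen (S j), gen (S j) @ gen (S i)) | i j.
        3 \<le> i \<and> i \<le> n \<and> 3 \<le> j \<and> j \<le> n \<and> (i > j + 1 \<or> j > i + 1)}
   \<union> {(gen (S 3) @ gen (T i) @ gen (S 3), gen (T i) @ gen (S 3) @ gen (T i)) | i. i < e}
   \<union> {(gen (S j) @ gen (T i), gen (T i) @ gen (S j)) | i j. i < e \<and> 4 \<le> j \<and> j \<le> n}
   \<union> {(tt e k i, tt e k j) | i j. i < e \<and> j < e}"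

definition phi :: "nat \<Rightarrow> nat \<Rightarrow> nat \<Rightarrow> genE word" where
  "phi e k m = (if m = 1 then tt e k 0 else gen (S (m + 1)))"

end

theory Submission
  imports Defs
begin

text \<open>Sending every \<open>t\<^sub>i\<close> to \<open>\<sigma>\<^sub>1\<close> and \<open>s\<^sub>j\<close> to \<open>\<sigma>\<^sub>j\<^sub>-\<^sub>1\<close> maps \<open>B\<^sup>(\<^sup>k\<^sup>)(e,e,n)\<close> to the braid
  group on \<open>n\<close> strands, and composed with the assignment in the theorem it sends \<open>q\<^sub>1\<close> to
  \<open>\<sigma>\<^sub>1\<^sup>2\<close> and \<open>q\<^sub>m\<close> to \<open>\<sigma>\<^sub>m\<close>: the classical embedding of \<open>B(2,1,n-1)\<close> as the braids whose
  first strand ends in first position.  Injectivity is proved without knowing the braid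
  group: the words over the generators of \<open>B\<^sup>(\<^sup>k\<^sup>)(e,e,n)\<close> act on pairs \<open>(h, p)\<close>, where
  \<open>h \<in> B(2,1,n-1)\<close> and \<open>p \<in> {1..n}\<close> is the position of the first strand (the action of the
  braid group on the cosets of that subgroup, written in coordinates).  The defining
  relations of \<open>B\<^sup>(\<^sup>k\<^sup>)(e,e,n)\<close> hold for this action, and the image of a word \<open>w\<close> of
  \<open>B(2,1,n-1)\<close> moves \<open>([], 1)\<close> to \<open>(w, 1)\<close>, so \<open>w\<close> can be read off its image.\<close>


section \<open>Presented groups\<close>

declare peq_trans[trans]

lemma equivp_peq: "equivp (peq R)"
  by (intro equivpI reflpI sympI transpI) (auto intro: peq.intros)

lemma peq_append_context: "peq R u v \<Longrightarrow> peq R (a @ u @ b) (a @ v @ b)"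
proof (induction rule: peq.induct)
  case (peq_refl w) show ?case by (rule peq.peq_refl)
next
  case (peq_sym u v) show ?case by (rule peq.peq_sym[OF peq_sym.IH])
next
  case (peq_trans u v w) show ?case by (rule peq.peq_trans[OF peq_trans.IH])
next
  case (peq_cancel u x v) show ?case using peq.peq_cancel[of R "a @ u" x "v @ b"] by simp
next
  case (peq_rel r s u v) show ?case using peq.peq_rel[OF peq_rel, of "a @ u" "v @ b"] by simp
qed

lemma peq_subword: "peq R u v \<Longrightarrow> x = a @ u @ b \<Longrightarrow> y = a @ v @ b \<Longrightarrow> peq R x y"
  using peq_append_context by blast

lemma peq_append_left: "peq R u v \<Longrightarrow> peq R (h @ u) (h @ v)"
  using peq_append_context[of R u v h "[]"] by simp

lemma peq_relation: "(r, s) \<in> R \<Longrightarrow> peq R r s"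
  using peq.peq_rel[of r s R "[]" "[]"] by simp

lemma word_inv_Nil [simp]: "word_inv [] = []"
  by (simp add: word_inv_def)

lemma word_inv_Cons [simp]: "word_inv (x # w) = word_inv w @ [letter_inv x]"
  by (simp add: word_inv_def)

lemma word_inv_append [simp]: "word_inv (u @ v) = word_inv v @ word_inv u"
  by (simp add: word_inv_def)

lemma letter_inv_Pair [simp]: "letter_inv (a, b) = (a, \<not> b)"
  by (simp add: letter_inv_def)

lemma letter_inv_letter_inv [simp]: "letter_inv (letter_inv x) = x"
  by (simp add: letter_inv_def)

lemma word_inv_word_inv [simp]: "word_inv (word_inv w) = w"
  by (induction w) auto

lemma peq_append_word_inv: "peq R (w @ word_inv w) []"
proof (induction w)
  case Nil then show ?case by (simp add: peq.peq_refl)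
next
  case (Cons x w)
  have "peq R ([x] @ (w @ word_inv w) @ [letter_inv x]) ([x] @ [] @ [letter_inv x])"
    by (rule peq_append_context[OF Cons])
  also have "peq R ([x] @ [] @ [letter_inv x]) []"
    using peq.peq_cancel[of R "[]" x "[]"] by simp
  finally show ?case by simp
qed

lemma peq_word_inv_append: "peq R (word_inv w @ w) []"
  using peq_append_word_inv[of R "word_inv w"] by simp

lemma peq_word_inv: "peq R u v \<Longrightarrow> peq R (word_inv u) (word_inv v)"
proof (induction rule: peq.induct)
  case (peq_refl w) show ?case by (rule peq.peq_refl)
next
  case (peq_sym u v) show ?case by (rule peq.peq_sym[OF peq_sym.IH])
next
  case (peq_trans u v w) show ?case by (rule peq.peq_trans[OF peq_trans.IH])
next
  case (peq_cancel u x v)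
  show ?case using peq.peq_cancel[of R "word_inv v" x "word_inv u"] by simp
next
  case (peq_rel r s u v)
  have "peq R (word_inv r) (word_inv r @ s @ word_inv s)"
    using peq_append_context[OF peq.peq_sym[OF peq_append_word_inv[of R s]], of "word_inv r" "[]"]
    by simp
  also have "peq R \<dots> (word_inv r @ r @ word_inv s)"
    by (rule peq.peq_sym, rule peq.peq_rel[OF peq_rel])
  also have "peq R \<dots> (word_inv s)"
    using peq_append_context[OF peq_word_inv_append[of R r], of "[]" "word_inv s"] by simp
  finally show ?case using peq_append_context[of R _ _ "word_inv v" "word_inv u"] by simp
qed

abbreviation pl :: "'a \<Rightarrow> 'a \<times> bool" where "pl c \<equiv> (c, False)"
abbreviation mi :: "'a \<Rightarrow> 'a \<times> bool" where "mi c \<equiv> (c, True)"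

definition commute :: "('a word \<times> 'a word) set \<Rightarrow> 'a word \<Rightarrow> 'a word \<Rightarrow> bool" where
  "commute R u w \<longleftrightarrow> peq R (u @ w) (w @ u)"

lemma commute_sym: "commute R u w \<Longrightarrow> commute R w u"
  unfolding commute_def by (rule peq.peq_sym)

lemma commute_word_inv: assumes "commute R u w" shows "commute R (word_inv u) w"
proof -
  have "peq R (word_inv u @ w) (word_inv u @ (w @ u) @ word_inv u)"
    using peq_append_context[OF peq.peq_sym[OF peq_append_word_inv[of R u]], of "word_inv u @ w" "[]"]
    by simp
  also have "peq R \<dots> (word_inv u @ (u @ w) @ word_inv u)"
    using assms unfolding commute_def by (metis peq_append_context peq.peq_sym)
  also have "peq R \<dots> (w @ word_inv u)"
    using peq_append_context[OF peq_word_inv_append[of R u], of "[]" "w @ word_inv u"] by simp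
  finally show ?thesis unfolding commute_def .
qed

lemma commute_append: assumes "commute R u w" "commute R v w" shows "commute R (u @ v) w"
proof -
  have "peq R (u @ v @ w) (u @ w @ v)"
    using assms(2) peq_append_context[of R "v @ w" "w @ v" u "[]"] by (simp add: commute_def)
  also have "peq R \<dots> (w @ u @ v)"
    using assms(1) peq_append_context[of R "u @ w" "w @ u" "[]" v] by (simp add: commute_def)
  finally show ?thesis unfolding commute_def by simp
qed

lemma commute_subword: "commute R u w \<Longrightarrow> x = a @ u @ w @ b \<Longrightarrow> y = a @ w @ u @ b \<Longrightarrow> peq R x y"
  unfolding commute_def by (rule peq_subword[where a = a and b = b]) simp_all

lemma braid_conj: assumes "peq R [pl a, pl b, pl a] [pl b, pl a, pl b]"
  shows "peq R [pl b, pl a, mi b] [mi a, pl b, pl a]"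
proof -
  have "peq R [pl b, pl a, mi b] [mi a, pl a, pl b, pl a, mi b]"
    using peq_append_context[OF peq.peq_sym[OF peq_word_inv_append[of R "[pl a]"]],
        of "[]" "[pl b, pl a, mi b]"]
    by simp
  also have "peq R \<dots> [mi a, pl b, pl a, pl b, mi b]"
    by (rule peq_subword[OF assms, where a = "[mi a]" and b = "[mi b]"]) simp_all
  also have "peq R \<dots> [mi a, pl b, pl a]"
    using peq_append_context[OF peq_append_word_inv[of R "[pl b]"], of "[mi a, pl b, pl a]" "[]"]
    by simp
  finally show ?thesis .
qed

lemma braid_conj_inv: assumes "peq R [pl a, pl b, pl a] [pl b, pl a, pl b]"
  shows "peq R [pl b, mi a, mi b] [mi a, mi b, pl a]"
  using peq_word_inv[OF braid_conj[OF assms]] by simp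

lemma wsubst_Nil [simp]: "wsubst f [] = []"
  by (simp add: wsubst_def)

lemma wsubst_Cons [simp]:
  "wsubst f (x # w) = (if snd x then word_inv (f (fst x)) else f (fst x)) @ wsubst f w"
  by (simp add: wsubst_def)

lemma wsubst_append [simp]: "wsubst f (u @ v) = wsubst f u @ wsubst f v"
  by (simp add: wsubst_def)

lemma peq_wsubst:
  assumes rel: "\<And>r s. (r, s) \<in> R \<Longrightarrow> peq R' (wsubst f r) (wsubst f s)"
  shows "peq R u v \<Longrightarrow> peq R' (wsubst f u) (wsubst f v)"
proof (induction rule: peq.induct)
  case (peq_refl w) show ?case by (rule peq.peq_refl)
next
  case (peq_sym u v) show ?case by (rule peq.peq_sym[OF peq_sym.IH])
next
  case (peq_trans u v w) show ?case by (rule peq.peq_trans[OF peq_trans.IH])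
next
  case (peq_cancel u x v)
  have "peq R' (wsubst f [x, letter_inv x]) []"
    by (cases x; cases "snd x") (simp_all add: peq_append_word_inv peq_word_inv_append)
  from peq_append_context[OF this, of "wsubst f u" "wsubst f v"] show ?case
    unfolding wsubst_append by (simp del: wsubst_Cons)
next
  case (peq_rel r s u v)
  from peq_append_context[OF rel[OF peq_rel], of "wsubst f u" "wsubst f v"] show ?case
    by simp
qed

lemma peq_fold_equiv:
  fixes act :: "'a \<times> bool \<Rightarrow> 's \<Rightarrow> 's"
  assumes eqv: "equivp eqv"
    and act_eqv: "\<And>x s s'. eqv s s' \<Longrightarrow> eqv (act x s) (act x s')"
    and act_preserves: "\<And>x s. P s \<Longrightarrow> P (act x s)"
    and act_cancel: "\<And>x s. eqv (act (letter_inv x) (act x s)) s"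
    and act_rel: "\<And>r r' s. (r, r') \<in> R \<Longrightarrow> P s \<Longrightarrow> eqv (fold act r s) (fold act r' s)"
  shows "peq R u v \<Longrightarrow> P s \<Longrightarrow> eqv (fold act u s) (fold act v s)"
proof -
  have fold_eqv: "eqv (fold act w s) (fold act w s')" if "eqv s s'" for w s s'
    using that by (induction w arbitrary: s s') (simp_all add: act_eqv)
  have fold_preserves: "P (fold act w s)" if "P s" for w s
    using that by (induction w arbitrary: s) (simp_all add: act_preserves)
  show "peq R u v \<Longrightarrow> P s \<Longrightarrow> eqv (fold act u s) (fold act v s)"
  proof (induction arbitrary: s rule: peq.induct)
    case (peq_refl w) then show ?case using equivp_reflp[OF eqv] by blast
  next
    case (peq_sym u v) then show ?case using equivp_symp[OF eqv] by blast
  next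
    case (peq_trans u v w) then show ?case using equivp_transp[OF eqv] by blast
  next
    case (peq_cancel u x v)
    then show ?case using fold_eqv act_cancel by simp
  next
    case (peq_rel r r' u v)
    then show ?case using fold_eqv act_rel fold_preserves by simp
  qed
qed

section \<open>The Artin group of type \<open>B\<close>\<close>

lemma relsB_commute:
  "1 \<le> a \<Longrightarrow> a \<le> n - 1 \<Longrightarrow> 1 \<le> b \<Longrightarrow> b \<le> n - 1 \<Longrightarrow> a > b + 1 \<or> b > a + 1
    \<Longrightarrow> commute (relsB n) [pl a] [pl b]"
  unfolding commute_def by (rule peq_relation) (auto simp: relsB_def gen_def)

lemma relsB_braid: "2 \<le> m \<Longrightarrow> m \<le> n - 2 \<Longrightarrow>
  peq (relsB n) [pl m, pl (m + 1), pl m] [pl (m + 1), pl m, pl (m + 1)]"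
  by (rule peq_relation) (auto simp: relsB_def gen_def)

lemma relsB_braid': "2 \<le> m \<Longrightarrow> m \<le> n - 2 \<Longrightarrow>
  peq (relsB n) [pl (m + 1), pl m, pl (m + 1)] [pl m, pl (m + 1), pl m]"
  using relsB_braid by (rule peq.peq_sym)

lemma relsB_braid4: "peq (relsB n) [pl 1, pl 2, pl 1, pl 2] [pl 2, pl 1, pl 2, pl 1]"
  by (rule peq_relation) (auto simp: relsB_def gen_def)

text \<open>\<open>q1_conj t = q\<^sub>t\<^sub>+\<^sub>1\<^sup>-\<^sup>1 \<cdots> q\<^sub>2\<^sup>-\<^sup>1 q\<^sub>1 q\<^sub>2 \<cdots> q\<^sub>t\<^sub>+\<^sub>1\<close>; in the braid group this is the full twist
  of the first strand around strand \<open>t + 2\<close>.\<close>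
primrec q1_conj :: "nat \<Rightarrow> nat word" where
  "q1_conj 0 = [pl 1]"
| "q1_conj (Suc t) = [mi (t + 2)] @ q1_conj t @ [pl (t + 2)]"

lemma q1_conj_commute_far: "t + 3 \<le> b \<Longrightarrow> b \<le> n - 1 \<Longrightarrow> commute (relsB n) (q1_conj t) [pl b]"
proof (induction t)
  case 0 then show ?case by (simp add: relsB_commute)
next
  case (Suc t)
  have c: "commute (relsB n) [pl (t + 2)] [pl b]" using Suc.prems by (intro relsB_commute) auto
  have "commute (relsB n) [mi (t + 2)] [pl b]" using commute_word_inv[OF c] by simp
  then show ?case using Suc c by (simp del: append.simps add: commute_append)
qed

lemma q1_conj_commute_near:
  "2 \<le> c \<Longrightarrow> c \<le> t \<Longrightarrow> t + 1 \<le> n - 1 \<Longrightarrow> commute (relsB n) (q1_conj t) [pl c]"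
proof (induction t arbitrary: c)
  case 0 then show ?case by simp
next
  case (Suc t)
  show ?case
  proof (cases "c \<le> t")
    case True
    have c: "commute (relsB n) [pl (t + 2)] [pl c]" using Suc.prems True by (intro relsB_commute) auto
    have "commute (relsB n) [mi (t + 2)] [pl c]" using commute_word_inv[OF c] by simp
    moreover have "commute (relsB n) (q1_conj t) [pl c]" using Suc True by simp
    ultimately show ?thesis using c by (simp del: append.simps add: commute_append)
  next
    case False
    then have cc: "c = t + 1" using Suc.prems by simp
    then obtain t' where t: "t = Suc t'" using Suc.prems by (cases t) auto
    define A where "A = q1_conj t'"
    define x where "x = t' + 2"
    have xr: "2 \<le> x" "x \<le> n - 2" using Suc.prems t by (auto simp: x_def)
    have cA: "commute (relsB n) A [pl (x + 1)]"
      unfolding A_def using q1_conj_commute_far[of t' "x + 1" n] xr by (simp add: x_def)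
    have "[pl c] @ q1_conj (Suc t) = [pl x, mi (x + 1), mi x] @ A @ [pl x, pl (x + 1)]"
      by (simp add: t cc A_def x_def)
    also have "peq (relsB n) \<dots> ([mi (x + 1), mi x, pl (x + 1)] @ A @ [pl x, pl (x + 1)])"
      by (rule peq_subword[OF braid_conj_inv[OF relsB_braid'[OF xr]], where a = "[]"]) simp_all
    also have "peq (relsB n) \<dots> ([mi (x + 1), mi x] @ A @ [pl (x + 1), pl x, pl (x + 1)])"
      by (rule commute_subword[OF commute_sym[OF cA], where a = "[mi (x + 1), mi x]"]) simp_all
    also have "peq (relsB n) \<dots> ([mi (x + 1), mi x] @ A @ [pl x, pl (x + 1), pl x])"
      by (rule peq_subword[OF relsB_braid'[OF xr], where a = "[mi (x + 1), mi x] @ A"]) simp_all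
    also have "[mi (x + 1), mi x] @ A @ [pl x, pl (x + 1), pl x] = q1_conj (Suc t) @ [pl c]"
      by (simp add: t cc A_def x_def)
    finally show ?thesis unfolding commute_def by (rule peq.peq_sym)
  qed
qed

lemma q1_conj_braid4:
  "t + 2 \<le> n - 1 \<Longrightarrow> peq (relsB n) (q1_conj t @ [pl (t + 2)] @ q1_conj t @ [pl (t + 2)])
    ([pl (t + 2)] @ q1_conj t @ [pl (t + 2)] @ q1_conj t)"
proof (induction t)
  case 0 then show ?case using relsB_braid4[of n] by (simp add: numeral_2_eq_2)
next
  case (Suc t)
  define A where "A = q1_conj t"
  define y where "y = t + 2"
  have yr: "2 \<le> y" "y \<le> n - 2" using Suc.prems by (auto simp: y_def)
  have IH: "peq (relsB n) (A @ [pl y] @ A @ [pl y]) ([pl y] @ A @ [pl y] @ A)"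
    using Suc by (simp add: A_def y_def)
  have cz: "commute (relsB n) A [pl (y + 1)]"
    unfolding A_def using q1_conj_commute_far[of t "y + 1" n] yr by (simp add: y_def)
  have czi: "commute (relsB n) A [mi (y + 1)]"
    using commute_sym[OF commute_word_inv[OF commute_sym[OF cz]]] by simp
  note pos = braid_conj[OF relsB_braid'[OF yr]] and neg = braid_conj_inv[OF relsB_braid[OF yr]]
  have "q1_conj (Suc t) @ [pl (Suc t + 2)] @ q1_conj (Suc t) @ [pl (Suc t + 2)]
     = [mi y] @ A @ [pl y, pl (y + 1), mi y] @ A @ [pl y, pl (y + 1)]"
    by (simp add: A_def y_def)
  also have "peq (relsB n) \<dots> ([mi y] @ A @ [mi (y + 1), pl y, pl (y + 1)] @ A @ [pl y, pl (y + 1)])"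
    by (rule peq_subword[OF pos, where a = "[mi y] @ A"]) simp_all
  also have "peq (relsB n) \<dots> ([mi y, mi (y + 1)] @ A @ [pl y, pl (y + 1)] @ A @ [pl y, pl (y + 1)])"
    by (rule commute_subword[OF czi, where a = "[mi y]"]) simp_all
  also have "peq (relsB n) \<dots> ([mi y, mi (y + 1)] @ A @ [pl y] @ A @ [pl (y + 1), pl y, pl (y + 1)])"
    by (rule commute_subword[OF commute_sym[OF cz], where a = "[mi y, mi (y + 1)] @ A @ [pl y]"])
      simp_all
  also have "peq (relsB n) \<dots> ([mi y, mi (y + 1)] @ A @ [pl y] @ A @ [pl y, pl (y + 1), pl y])"
    by (rule peq_subword[OF relsB_braid'[OF yr], where a = "[mi y, mi (y + 1)] @ A @ [pl y] @ A"])
      simp_all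
  also have "peq (relsB n) \<dots> ([mi y, mi (y + 1)] @ [pl y] @ A @ [pl y] @ A @ [pl (y + 1), pl y])"
    by (rule peq_subword[OF IH, where a = "[mi y, mi (y + 1)]"]) simp_all
  also have "peq (relsB n) \<dots> ([pl (y + 1), mi y, mi (y + 1)] @ A @ [pl y] @ A @ [pl (y + 1), pl y])"
    by (rule peq_subword[OF peq.peq_sym[OF neg], where a = "[]"]) simp_all
  also have "peq (relsB n) \<dots> ([pl (y + 1), mi y] @ A @ [mi (y + 1), pl y] @ A @ [pl (y + 1), pl y])"
    by (rule commute_subword[OF commute_sym[OF czi], where a = "[pl (y + 1), mi y]"]) simp_all
  also have "peq (relsB n) \<dots> ([pl (y + 1), mi y] @ A @ [mi (y + 1), pl y, pl (y + 1)] @ A @ [pl y])"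
    by (rule commute_subword[OF cz, where a = "[pl (y + 1), mi y] @ A @ [mi (y + 1), pl y]"]) simp_all
  also have "peq (relsB n) \<dots> ([pl (y + 1), mi y] @ A @ [pl y, pl (y + 1), mi y] @ A @ [pl y])"
    by (rule peq_subword[OF peq.peq_sym[OF pos], where a = "[pl (y + 1), mi y] @ A"]) simp_all
  also have "\<dots> = [pl (Suc t + 2)] @ q1_conj (Suc t) @ [pl (Suc t + 2)] @ q1_conj (Suc t)"
    by (simp add: A_def y_def)
  finally show ?case .
qed

section \<open>Braids acting on the cosets of \<open>B(2,1,n-1)\<close>\<close>

type_synonym strand_state = "nat word \<times> nat"

text \<open>The action of \<open>\<sigma>\<^sub>j\<close> (for \<open>b = False\<close>) or \<open>\<sigma>\<^sub>j\<^sup>-\<^sup>1\<close> (for \<open>b = True\<close>) on a state \<open>(h, p)\<close>,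
  where \<open>p\<close> is the position of the first strand: crossings of the first strand move it,
  except that completing the double crossing \<open>\<sigma>\<^sub>j\<^sup>2\<close> records \<open>q1_conj (j - 1)\<close>; any other
  crossing is recorded as \<open>q\<^sub>j\<^sub>+\<^sub>1\<close> if it lies left of the first strand and as \<open>q\<^sub>j\<close> if it
  lies right of it.\<close>

fun strand_step :: "nat \<Rightarrow> bool \<Rightarrow> strand_state \<Rightarrow> strand_state" where
  "strand_step j b (h, p) =
    (if \<not> b then
       (if p = j then (h, p + 1) else if p = j + 1 then (h @ q1_conj (j - 1), j)
        else if j + 1 < p then (h @ [pl (j + 1)], p) else (h @ [pl j], p))
     else
       (if p = j + 1 then (h, j) else if p = j then (h @ word_inv (q1_conj (j - 1)), j + 1)
        else if j + 1 < p then (h @ [mi (j + 1)], p) else (h @ [mi j], p)))"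

declare strand_step.simps [simp del]

definition state_equiv :: "nat \<Rightarrow> strand_state \<Rightarrow> strand_state \<Rightarrow> bool" where
  "state_equiv n s s' \<longleftrightarrow> snd s = snd s' \<and> peq (relsB n) (fst s) (fst s')"

lemma equivp_state_equiv: "equivp (state_equiv n)"
  using equivp_peq[of "relsB n"]
  by (intro equivpI reflpI sympI transpI)
     (auto simp: state_equiv_def dest: equivp_reflp equivp_symp equivp_transp)

lemma state_equiv_extend: "peq (relsB n) u u' \<Longrightarrow> state_equiv n (h @ u, p) (h @ u', p)"
  by (simp add: state_equiv_def peq_append_left)

lemma strand_step_equiv: "state_equiv n s s' \<Longrightarrow> state_equiv n (strand_step j b s) (strand_step j b s')"
  by (cases s; cases s')
     (auto simp: state_equiv_def strand_step.simps intro: peq_append_context[where a = "[]", simplified])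

lemma strand_step_cancel: "1 \<le> j \<Longrightarrow> state_equiv n (strand_step j (\<not> b) (strand_step j b s)) s"
proof (cases s)
  case (Pair h p)
  have inv: "peq (relsB n) (h @ w @ word_inv w) h" "peq (relsB n) (h @ word_inv w @ w) h" for w
    using peq_append_left[OF peq_append_word_inv[of "relsB n" w], of h]
      peq_append_left[OF peq_word_inv_append[of "relsB n" w], of h]
    by simp_all
  have cancel: "peq (relsB n) (h @ [pl c, mi c]) h" "peq (relsB n) (h @ [mi c, pl c]) h" for c
    using peq.peq_cancel[of "relsB n" h "pl c" "[]"] peq.peq_cancel[of "relsB n" h "mi c" "[]"]
    by simp_all
  assume "1 \<le> j"
  then show ?thesis using Pair
    by (cases b) (auto simp: state_equiv_def strand_step.simps inv cancel peq.peq_refl)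
qed

lemma strand_step_braid:
  assumes "1 \<le> j" "j + 2 \<le> n" "1 \<le> p" "p \<le> n"
  shows "state_equiv n (strand_step j False (strand_step (j + 1) False (strand_step j False (h, p))))
    (strand_step (j + 1) False (strand_step j False (strand_step (j + 1) False (h, p))))"
proof -
  obtain i where j: "j = Suc i" using assms by (cases j) auto
  let ?A = "q1_conj i" and ?x = "pl (i + 2)"
  consider "p < j" | "p = j" | "p = j + 1" | "p = j + 2" | "j + 2 < p" by linarith
  then show ?thesis
  proof cases
    case 1
    then show ?thesis using assms relsB_braid[of j n]
      by (simp add: strand_step.simps state_equiv_extend)
  next
    case 2
    then show ?thesis using equivp_reflp[OF equivp_state_equiv] by (simp add: strand_step.simps)
  next
    case 3
    have "peq (relsB n) (?A @ [?x]) ([?x, letter_inv ?x] @ ?A @ [?x])"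
      using peq.peq_sym[OF peq.peq_cancel[of "relsB n" "[]" ?x "?A @ [?x]"]] by simp
    then show ?thesis using 3 j by (simp add: strand_step.simps state_equiv_extend)
  next
    case 4
    have "peq (relsB n) ([?x, mi (i + 2)] @ ?A @ [?x] @ ?A) (?A @ [?x] @ ?A)"
      using peq.peq_cancel[of "relsB n" "[]" ?x "?A @ [?x] @ ?A"] by simp
    also have "peq (relsB n) \<dots> ([mi (i + 2), ?x] @ ?A @ [?x] @ ?A)"
      using peq.peq_sym[OF peq.peq_cancel[of "relsB n" "[]" "mi (i + 2)" "?A @ [?x] @ ?A"]] by simp
    also have "peq (relsB n) \<dots> ([mi (i + 2)] @ ?A @ [?x] @ ?A @ [?x])"
      using assms j
      by (intro peq_subword[OF peq.peq_sym[OF q1_conj_braid4], where a = "[mi (i + 2)]"]) auto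
    finally show ?thesis using 4 j by (simp add: strand_step.simps state_equiv_extend)
  next
    case 5
    then show ?thesis using assms relsB_braid[of "j + 1" n]
      by (simp add: strand_step.simps state_equiv_extend)
  qed
qed

lemma strand_step_commute:
  assumes "1 \<le> a" "a + 2 \<le> b" "b \<le> n - 1" "p \<le> n"

  shows "state_equiv n (strand_step b False (strand_step a False (h, p)))
    (strand_step a False (strand_step b False (h, p)))"
proof -
  have step_commute: "state_equiv n (h @ u @ v, p') (h @ v @ u, p')"
    if "commute (relsB n) u v" for u v p'

    using that by (simp add: commute_def state_equiv_extend)
  consider "p < a" | "p = a" | "p = a + 1" | "a + 1 < p \<and> p < b" | "p = b" | "p = b + 1" | "b + 1 < p"
    by linarith
  then show ?thesis
  proof cases
    case 3
    then show ?thesis using assms step_commute[OF q1_conj_commute_far[of "a - 1" b n]]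
      by (simp add: strand_step.simps)
  next
    case 6
    then show ?thesis using assms step_commute[OF commute_sym[OF q1_conj_commute_near[of "a + 1" "b - 1" n]]]
      by (simp add: strand_step.simps)
  qed (use assms step_commute[OF relsB_commute] equivp_reflp[OF equivp_state_equiv] in
      \<open>auto simp: strand_step.simps\<close>)
qed

section \<open>The group \<open>B\<^sup>(\<^sup>k\<^sup>)(e,e,n)\<close>\<close>

lemma relsE_braid_S: "3 \<le> i \<Longrightarrow> i \<le> n \<Longrightarrow> 3 \<le> j \<Longrightarrow> j \<le> n \<Longrightarrow> i = j + 1 \<or> j = i + 1 \<Longrightarrow>
  peq (relsE e k n) [pl (S i), pl (S j), pl (S i)] [pl (S j), pl (S i), pl (S j)]"
  by (rule peq_relation) (auto simp: relsE_def gen_def)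

lemma relsE_commute_S: "3 \<le> i \<Longrightarrow> i \<le> n \<Longrightarrow> 3 \<le> j \<Longrightarrow> j \<le> n \<Longrightarrow> i > j + 1 \<or> j > i + 1 \<Longrightarrow>
  peq (relsE e k n) [pl (S i), pl (S j)] [pl (S j), pl (S i)]"
  by (rule peq_relation) (auto simp: relsE_def gen_def)

lemma relsE_braid_ST: "i < e \<Longrightarrow>
  peq (relsE e k n) [pl (S 3), pl (T i), pl (S 3)] [pl (T i), pl (S 3), pl (T i)]"
  by (rule peq_relation) (auto simp: relsE_def gen_def)

lemma relsE_commute_ST: "i < e \<Longrightarrow> 4 \<le> j \<Longrightarrow> j \<le> n \<Longrightarrow>
  peq (relsE e k n) [pl (S j), pl (T i)] [pl (T i), pl (S j)]"
  by (rule peq_relation) (auto simp: relsE_def gen_def)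

lemma relsE_tt: "i < e \<Longrightarrow> j < e \<Longrightarrow> peq (relsE e k n) (tt e k i) (tt e k j)"
  by (rule peq_relation) (auto simp: relsE_def)

lemma relsE_commute_TT_S: "i < e \<Longrightarrow> i' < e \<Longrightarrow> 4 \<le> j \<Longrightarrow> j \<le> n \<Longrightarrow>
  peq (relsE e k n) [pl (T i), pl (T i'), pl (S j)] [pl (S j), pl (T i), pl (T i')]"
proof -
  assume a: "i < e" "i' < e" "4 \<le> j" "j \<le> n"
  have "peq (relsE e k n) [pl (T i), pl (T i'), pl (S j)] [pl (T i), pl (S j), pl (T i')]"
    using a by (intro peq_subword[OF peq.peq_sym[OF relsE_commute_ST], where a = "[pl (T i)]"]) auto
  also have "peq (relsE e k n) \<dots> [pl (S j), pl (T i), pl (T i')]"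
    using a by (intro peq_subword[OF peq.peq_sym[OF relsE_commute_ST], where a = "[]"]) auto
  finally show ?thesis .
qed

text \<open>Rewrite one factor \<open>t\<^sub>0 t\<^sub>-\<^sub>k\<close> as \<open>t\<^sub>-\<^sub>k t\<^sub>-\<^sub>2\<^sub>k\<close>, then use the braid relations between \<open>s\<^sub>3\<close>
  and the \<open>t\<^sub>i\<close>.\<close>
lemma relsE_braid4_tt_S:
  assumes "2 \<le> e"
  shows "peq (relsE e k n) (tt e k 0 @ [pl (S 3)] @ tt e k 0 @ [pl (S 3)])
    ([pl (S 3)] @ tt e k 0 @ [pl (S 3)] @ tt e k 0)"
proof -
  define b where "b = (0 + e - k) mod e"
  define c where "c = (b + e - k) mod e"
  have bc: "b < e" "c < e" using assms by (auto simp: b_def c_def)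
  have t0: "tt e k 0 = [pl (T 0), pl (T b)]" by (simp add: tt_def gen_def b_def)
  have shift: "peq (relsE e k n) [pl (T 0), pl (T b)] [pl (T b), pl (T c)]"
    using relsE_tt[of 0 e b k n] bc assms by (simp add: tt_def gen_def b_def c_def)
  let ?a = "pl (T 0)" and ?b = "pl (T b)" and ?c = "pl (T c)" and ?s = "pl (S 3)"
  have "peq (relsE e k n) [?a, ?b, ?s, ?a, ?b, ?s] [?a, ?b, ?s, ?b, ?c, ?s]"
    by (rule peq_subword[OF shift, where a = "[?a, ?b, ?s]"]) simp_all
  also have "peq (relsE e k n) \<dots> [?a, ?s, ?b, ?s, ?c, ?s]"
    by (rule peq_subword[OF peq.peq_sym[OF relsE_braid_ST[OF bc(1)]], where a = "[?a]"]) simp_all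
  also have "peq (relsE e k n) \<dots> [?a, ?s, ?b, ?c, ?s, ?c]"
    by (rule peq_subword[OF relsE_braid_ST[OF bc(2)], where a = "[?a, ?s, ?b]"]) simp_all
  also have "peq (relsE e k n) \<dots> [?a, ?s, ?a, ?b, ?s, ?c]"
    by (rule peq_subword[OF peq.peq_sym[OF shift], where a = "[?a, ?s]"]) simp_all
  also have "peq (relsE e k n) \<dots> [?s, ?a, ?s, ?b, ?s, ?c]"
    using assms by (intro peq_subword[OF peq.peq_sym[OF relsE_braid_ST], where a = "[]"]) simp_all
  also have "peq (relsE e k n) \<dots> [?s, ?a, ?b, ?s, ?b, ?c]"
    by (rule peq_subword[OF relsE_braid_ST[OF bc(1)], where a = "[?s, ?a]"]) simp_all
  also have "peq (relsE e k n) \<dots> [?s, ?a, ?b, ?s, ?a, ?b]"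
    by (rule peq_subword[OF peq.peq_sym[OF shift], where a = "[?s, ?a, ?b, ?s]"]) simp_all
  finally show ?thesis by (simp add: t0)
qed

lemma phi_respects_relsB:
  assumes "(r, s) \<in> relsB n" "3 \<le> n" "2 \<le> e"
  shows "peq (relsE e k n) (wsubst (phi e k) r) (wsubst (phi e k) s)"
proof -
  have phi_S: "m \<noteq> 1 \<Longrightarrow> phi e k m = [pl (S (m + 1))]" for m by (simp add: phi_def gen_def)
  have phi_1: "phi e k (Suc 0) = [pl (T 0), pl (T ((e - k) mod e))]"
    by (simp add: phi_def tt_def gen_def)
  have e: "0 < e" "(e - k) mod e < e" using assms by auto
  from assms(1) show ?thesis unfolding relsB_def
  proof (elim UnE CollectE exE conjE insertE)
    assume "(r, s) = (gen 1 @ gen 2 @ gen 1 @ gen 2, gen 2 @ gen 1 @ gen 2 @ gen 1)"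
    then show ?thesis using relsE_braid4_tt_S[OF assms(3), of k n]
      by (simp add: gen_def phi_S phi_def)
  next
    assume "(r, s) \<in> {}" then show ?thesis by simp
  next
    fix m assume "(r, s) = (gen m @ gen (m + 1) @ gen m, gen (m + 1) @ gen m @ gen (m + 1))"
      "2 \<le> m" "m \<le> n - 2"
    then show ?thesis using relsE_braid_S[of "m + 1" n "m + 2" e k] by (simp add: gen_def phi_S)
  next
    fix a b assume rs: "(r, s) = (gen a @ gen b, gen b @ gen a)"
      and ab: "1 \<le> a" "a \<le> n - 1" "1 \<le> b" "b \<le> n - 1" "b + 1 < a \<or> a + 1 < b"
    consider "a = 1" | "b = 1" | "a \<noteq> 1 \<and> b \<noteq> 1" by blast
    then show ?thesis
    proof cases
      case 1 then show ?thesis using rs ab e relsE_commute_TT_S[of 0 e _ "b + 1" n k]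
        by (simp add: gen_def phi_1 phi_S)
    next
      case 2 then show ?thesis using rs ab e peq.peq_sym[OF relsE_commute_TT_S[of 0 e _ "a + 1" n k]]
        by (simp add: gen_def phi_1 phi_S)
    next
      case 3 then show ?thesis using rs ab relsE_commute_S[of "a + 1" n "b + 1" e k]
        by (simp add: gen_def phi_S)
    qed
  qed
qed

section \<open>Injectivity\<close>

text \<open>\<open>t\<^sub>i\<close> acts as \<open>\<sigma>\<^sub>1\<close> and \<open>s\<^sub>j\<close> as \<open>\<sigma>\<^sub>j\<^sub>-\<^sub>1\<close>; the letters \<open>S j\<close> with \<open>j \<notin> {3..n}\<close>, which occur in
  no relation, act trivially.\<close>
fun strand_index :: "nat \<Rightarrow> genE \<Rightarrow> nat option" where
  "strand_index n (T i) = Some 1"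
| "strand_index n (S j) = (if 3 \<le> j \<and> j \<le> n then Some (j - 1) else None)"

definition strand_act :: "nat \<Rightarrow> genE \<times> bool \<Rightarrow> strand_state \<Rightarrow> strand_state" where
  "strand_act n x s = (case strand_index n (fst x) of None \<Rightarrow> s | Some j \<Rightarrow> strand_step j (snd x) s)"

lemma strand_index_range: "strand_index n g = Some j \<Longrightarrow> 3 \<le> n \<Longrightarrow> 1 \<le> j \<and> j + 1 \<le> n"
  by (cases g) (auto split: if_splits)

lemma strand_act_position:
  "3 \<le> n \<Longrightarrow> 1 \<le> snd s \<and> snd s \<le> n \<Longrightarrow> 1 \<le> snd (strand_act n x s) \<and> snd (strand_act n x s) \<le> n"
  by (cases s)
     (auto simp: strand_act_def strand_step.simps split: option.splits dest!: strand_index_range)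

lemma strand_act_cancel: "state_equiv n (strand_act n (letter_inv x) (strand_act n x s)) s"
proof (cases "strand_index n (fst x)")
  case None
  then show ?thesis using equivp_reflp[OF equivp_state_equiv]
    by (simp add: strand_act_def letter_inv_def)
next
  case (Some j)
  then have "1 \<le> j" by (cases "fst x") (auto split: if_splits)
  then show ?thesis using Some strand_step_cancel[of j n "snd x" s]
    by (simp add: strand_act_def letter_inv_def)
qed

lemma strand_act_rel:
  assumes "(r, r') \<in> relsE e k n" "3 \<le> n" "1 \<le> p" "p \<le> n"
  shows "state_equiv n (fold (strand_act n) r (h, p)) (fold (strand_act n) r' (h, p))"
proof -
  note braid = strand_step_braid[OF _ _ assms(3,4)] and commute = strand_step_commute[OF _ _ _ assms(4)]
  note sym = equivp_symp[OF equivp_state_equiv]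
  from assms(1) show ?thesis unfolding relsE_def
  proof (elim UnE CollectE exE conjE)
    fix i j assume rel: "(r, r') = (gen (S i) @ gen (S j) @ gen (S i), gen (S j) @ gen (S i) @ gen (S j))"
      and ij: "3 \<le> i" "i \<le> n" "3 \<le> j" "j \<le> n" "i = j + 1 \<or> j = i + 1"
    obtain m where "2 \<le> m" "m + 2 \<le> n" "(i, j) = (m + 1, m + 2) \<or> (i, j) = (m + 2, m + 1)"
      using ij by (intro that[of "min i j - 1"]) auto
    then show ?thesis using rel braid[of m] by (auto simp: gen_def strand_act_def intro: sym)

  next
    fix i j assume "(r, r') = (gen (S i) @ gen (S j), gen (S j) @ gen (S i))"
      "3 \<le> i" "i \<le> n" "3 \<le> j" "j \<le> n" "i > j + 1 \<or> j > i + 1"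
    then show ?thesis using commute[of "i - 1" "j - 1"] commute[of "j - 1" "i - 1"]
      by (auto simp: gen_def strand_act_def intro: sym)
  next
    fix i assume "(r, r') = (gen (S 3) @ gen (T i) @ gen (S 3), gen (T i) @ gen (S 3) @ gen (T i))"
    then show ?thesis using braid[of 1] assms(2)
      by (auto simp: gen_def strand_act_def numeral_3_eq_3 intro: sym)
  next
    fix i j assume "(r, r') = (gen (S j) @ gen (T i), gen (T i) @ gen (S j))" "4 \<le> j" "j \<le> n"
    then show ?thesis using commute[of 1 "j - 1"]
      by (auto simp: gen_def strand_act_def intro: sym)
  next
    fix i j assume "(r, r') = (tt e k i, tt e k j)"
    then show ?thesis using equivp_reflp[OF equivp_state_equiv]
      by (simp add: tt_def gen_def strand_act_def)
  qed
qed

lemma strand_act_wsubst_phi: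
  "words_over (gensB n) u \<Longrightarrow> fold (strand_act n) (wsubst (phi e k) u) (h, 1) = (h @ u, 1)"
proof (induction u arbitrary: h)
  case Nil then show ?case by simp
next
  case (Cons x u)
  obtain m b where x: "x = (m, b)" by (cases x)
  have m: "1 \<le> m" "m + 1 \<le> n" using Cons.prems x by (auto simp: words_over_def gensB_def)
  have "fold (strand_act n) (if b then word_inv (phi e k m) else phi e k m) (h, 1) = (h @ [(m, b)], 1)"
    using m by (cases b; cases "m = 1")
      (simp_all add: phi_def tt_def gen_def strand_act_def strand_step.simps)
  moreover have "words_over (gensB n) u" using Cons.prems by (simp add: words_over_def)
  ultimately show ?case using Cons.IH by (cases b) (simp_all add: x)

qed

lemma phi_injective:
  assumes "3 \<le> n" "words_over (gensB n) u" "words_over (gensB n) v"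
    and "peq (relsE e k n) (wsubst (phi e k) u) (wsubst (phi e k) v)"
  shows "peq (relsB n) u v"
proof -
  let ?P = "\<lambda>s. 1 \<le> snd s \<and> snd s \<le> n"
  have "state_equiv n (fold (strand_act n) (wsubst (phi e k) u) ([], 1))
      (fold (strand_act n) (wsubst (phi e k) v) ([], 1))"
  proof (rule peq_fold_equiv[OF equivp_state_equiv, where P = ?P])
    show "state_equiv n (strand_act n x s) (strand_act n x s')" if "state_equiv n s s'" for x s s'
      using that by (simp add: strand_act_def strand_step_equiv split: option.split)
    show "?P (strand_act n x s)" if "?P s" for x s
      using strand_act_position[OF assms(1) that] .
    show "state_equiv n (fold (strand_act n) r s) (fold (strand_act n) r' s)"
      if "(r, r') \<in> relsE e k n" "?P s" for r r' s
      using strand_act_rel[OF that(1) assms(1), where h = "fst s" and p = "snd s"] that(2) by simp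

  qed (use assms(1,4) strand_act_cancel in auto)

  then show ?thesis
    using strand_act_wsubst_phi[OF assms(2), of e k "[]"] strand_act_wsubst_phi[OF assms(3), of e k "[]"]
    by (simp add: state_equiv_def)

qed

theorem mainTheorem13:
  fixes n e k :: nat
  assumes "n \<ge> 3" and "e \<ge> 2" and "1 \<le> k" and "k \<le> e - 1"
  shows "(\<forall>i<e. \<forall>j<e. peq (relsE e k n) (tt e k i) (tt e k j))
    \<and> (\<forall>u v. words_over (gensB n) u \<longrightarrow> words_over (gensB n) v \<longrightarrow>
          peq (relsB n) u v \<longrightarrow> peq (relsE e k n) (wsubst (phi e k) u) (wsubst (phi e k) v))
    \<and> (\<forall>u v. words_over (gensB n) u \<longrightarrow> words_over (gensB n) v \<longrightarrow>
          peq (relsE e k n) (wsubst (phi e k) u) (wsubst (phi e k) v) \<longrightarrow> peq (relsB n) u v)"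
proof (intro conjI allI impI)
  fix i j assume "i < e" "j < e"
  then show "peq (relsE e k n) (tt e k i) (tt e k j)" by (rule relsE_tt)
next
  fix u v assume "peq (relsB n) u v"
  then show "peq (relsE e k n) (wsubst (phi e k) u) (wsubst (phi e k) v)"
    by (rule peq_wsubst[rotated]) (rule phi_respects_relsB[OF _ assms(1,2)])
next
  fix u v assume "words_over (gensB n) u" "words_over (gensB n) v"
    "peq (relsE e k n) (wsubst (phi e k) u) (wsubst (phi e k) v)"
  then show "peq (relsB n) u v" by (rule phi_injective[OF assms(1)])
qed


end
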